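(* Let $\varphi_0,\varphi_1\in\mathrm{Mon}_+$ and let $d$ be the distance defined by $d(\varphi_0,\varphi_1)^2=\min\mathcal{L}(v)$, the minimum being over all $v\in L^2([0,1],H^1_0([0,1]))$ admitting a Lagrangian flow $\varphi$ with $\varphi(0,\cdot)=\varphi_0$, $\varphi(1,\cdot)=\varphi_1$, where $\mathcal{L}(v)=\int_0^1\int_0^1 v^2+\tfrac14(\partial_x v)^2\,dx\,dt$. Then $$\sup_{x\in[0,1]}|\varphi_0(x)-\varphi_1(x)|\le 2\,d(\varphi_0,\varphi_1),$$ where the supremum is a pointwise supremum (not an essential supremum).
   Context: $\mathrm{Mon}_+$ denotes the set of nondecreasing functions $f:[0,1]\to[0,1]$ with $f(0)=0$ and $f(1)=1$. Definition (Lagrangian flow): let $v\in L^1([0,1],C([0,1]))$. A map $\varphi:[0,1]\times[0,1]\to[0,1]$, $(t,x)\mapsto\varphi(t,x)$, is a Lagrangian flow associated with $v$ if (i) $x\mapsto\varphi(t,x)$ is nondecreasing for every $t$, and (ii) for every $x$ the map $t\mapsto\varphi(t,x)$ is absolutely continuous and $\varphi(t,x)-\varphi(s,x)=\int_s^t v(r,\varphi(r,x))\,dr$ for all $0\le s<t\le 1$. *)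

theory Defs
  imports "HOL-Analysis.Analysis"
begin

text \<open>Mon_+ : nondecreasing maps [0,1] -> [0,1] with f 0 = 0 and f 1 = 1
  (functions are real => real; only values on [0,1] matter).\<close>
definition Mon_plus :: "(real \<Rightarrow> real) set" where
  "Mon_plus = {f. mono_on {0..1} f \<and> f ` {0..1} \<subseteq> {0..1} \<and> f 0 = 0 \<and> f 1 = 1}"

text \<open>Membership of v in L^2([0,1], H^1_0([0,1])), witnessed by its spatial
  derivative w = d/dx v: w is jointly measurable and square integrable on
  [0,1]^2, and for every time t in [0,1], v(t,.) is the antiderivative of
  w(t,.) vanishing at x = 0 and at x = 1 (1D characterisation of H^1_0 as
  absolutely continuous functions with L^2 derivative and zero trace).\<close>
definition L2_H10 :: "(real \<Rightarrow> real \<Rightarrow> real) \<Rightarrow> (real \<Rightarrow> real \<Rightarrow> real) \<Rightarrow> bool" where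
  "L2_H10 v w \<longleftrightarrow>
     (\<lambda>p. w (fst p) (snd p)) \<in> borel_measurable lborel \<and>
     set_integrable lborel ({0..1} \<times> {0..1}) (\<lambda>p. (w (fst p) (snd p))\<^sup>2) \<and>
     (\<forall>t\<in>{0..1}. set_integrable lborel {0..1} (w t) \<and>
        (\<forall>x\<in>{0..1}. v t x = (LINT y:{0..x}|lborel. w t y)) \<and>
        v t 1 = 0)"

definition energy :: "(real \<Rightarrow> real \<Rightarrow> real) \<Rightarrow> (real \<Rightarrow> real \<Rightarrow> real) \<Rightarrow> real" where
  "energy v w = (LINT t:{0..1}|lborel. LINT x:{0..1}|lborel. (v t x)\<^sup>2 + (1/4) * (w t x)\<^sup>2)"

text \<open>Lagrangian flow associated with v (phi t x = phi(t,x)).  Absolute continuity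
  of t -> phi(t,x) is implied by the integral identity with integrable integrand.\<close>
definition lagrangian_flow :: "(real \<Rightarrow> real \<Rightarrow> real) \<Rightarrow> (real \<Rightarrow> real \<Rightarrow> real) \<Rightarrow> bool" where
  "lagrangian_flow v \<phi> \<longleftrightarrow>
     (\<forall>t\<in>{0..1}. \<forall>x\<in>{0..1}. \<phi> t x \<in> {0..1}) \<and>
     (\<forall>t\<in>{0..1}. mono_on {0..1} (\<phi> t)) \<and>
     (\<forall>x\<in>{0..1}. \<forall>s t. 0 \<le> s \<and> s < t \<and> t \<le> 1 \<longrightarrow>
        set_integrable lborel {s..t} (\<lambda>r. v r (\<phi> r x)) \<and>
        \<phi> t x - \<phi> s x = (LINT r:{s..t}|lborel. v r (\<phi> r x)))"

definition admissible :: "(real \<Rightarrow> real) \<Rightarrow> (real \<Rightarrow> real) \<Rightarrow>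
    ((real \<Rightarrow> real \<Rightarrow> real) \<times> (real \<Rightarrow> real \<Rightarrow> real)) set" where
  "admissible \<phi>0 \<phi>1 = {(v, w). L2_H10 v w \<and>
     (\<exists>\<phi>. lagrangian_flow v \<phi> \<and> (\<forall>x\<in>{0..1}. \<phi> 0 x = \<phi>0 x \<and> \<phi> 1 x = \<phi>1 x))}"

text \<open>d(phi0,phi1) = sqrt(min L) = inf of sqrt(L(v)) over admissible v
  (taken in ereal so that it is meaningful without presupposing the minimum exists).\<close>
definition dist_Mon :: "(real \<Rightarrow> real) \<Rightarrow> (real \<Rightarrow> real) \<Rightarrow> ereal" where
  "dist_Mon \<phi>0 \<phi>1 = (INF p \<in> admissible \<phi>0 \<phi>1. ereal (sqrt (energy (fst p) (snd p))))"

end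

theory Submission
  imports Defs
begin

text \<open>Along a trajectory, \<open>|\<phi>(1,x) - \<phi>(0,x)| \<le> \<integral>\<^sub>0\<^sup>1 |v(t,\<phi>(t,x))| dt\<close>.
  Since \<open>v(t,\<cdot>)\<close> vanishes at \<open>0\<close>, \<open>sup\<^sub>x |v(t,x)| \<le> \<integral>\<^sub>0\<^sup>1 |\<partial>\<^sub>x v(t,y)| dy\<close>, so the
  displacement is at most the \<open>L\<^sup>1\<close> norm of \<open>\<partial>\<^sub>x v\<close> on the unit square, which by
  Cauchy--Schwarz is at most its \<open>L\<^sup>2\<close> norm, i.e. at most \<open>\<surd>(4 L(v)) = 2 \<surd>L(v)\<close>.\<close>

lemma set_nn_integral_square_le:
  assumes [measurable]: "f \<in> borel_measurable M" "A \<in> sets M"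
  shows "(\<integral>\<^sup>+x\<in>A. f x \<partial>M)\<^sup>2 \<le> emeasure M A * (\<integral>\<^sup>+x\<in>A. (f x)\<^sup>2 \<partial>M)"
proof -
  have "(\<integral>\<^sup>+x\<in>A. f x \<partial>M)\<^sup>2 = (\<integral>\<^sup>+x. (f x * indicator A x) * indicator A x \<partial>M)\<^sup>2"
    by (intro arg_cong[where f="\<lambda>a. a\<^sup>2"] nn_integral_cong) (simp add: indicator_def)
  also have "\<dots> \<le> (\<integral>\<^sup>+x. (f x * indicator A x)\<^sup>2 \<partial>M) * (\<integral>\<^sup>+x. (indicator A x)\<^sup>2 \<partial>M)"
    by (rule Cauchy_Schwarz_nn_integral) measurable
  also have "(\<integral>\<^sup>+x. (indicator A x :: ennreal)\<^sup>2 \<partial>M) = emeasure M A"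
    by (simp add: power2_eq_square flip: indicator_inter_arith)
  also have "(\<integral>\<^sup>+x. (f x * indicator A x)\<^sup>2 \<partial>M) = (\<integral>\<^sup>+x\<in>A. (f x)\<^sup>2 \<partial>M)"
    by (intro nn_integral_cong) (simp add: indicator_def)
  finally show ?thesis by (simp add: mult.commute)
qed

lemma (in sigma_finite_measure) set_nn_integral_Times:
  assumes [measurable]: "f \<in> borel_measurable (N \<Otimes>\<^sub>M M)" "A \<in> sets N" "B \<in> sets M"
  shows "(\<integral>\<^sup>+p\<in>A \<times> B. f p \<partial>(N \<Otimes>\<^sub>M M)) = (\<integral>\<^sup>+x\<in>A. (\<integral>\<^sup>+y\<in>B. f (x, y) \<partial>M) \<partial>N)"
proof -
  have "(\<integral>\<^sup>+p\<in>A \<times> B. f p \<partial>(N \<Otimes>\<^sub>M M)) = (\<integral>\<^sup>+x. \<integral>\<^sup>+y. f (x, y) * indicator (A \<times> B) (x, y) \<partial>M \<partial>N)"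
    by (rule nn_integral_fst[symmetric]) measurable
  also have "\<dots> = (\<integral>\<^sup>+x\<in>A. (\<integral>\<^sup>+y\<in>B. f (x, y) \<partial>M) \<partial>N)"
  proof (intro nn_integral_cong)
    fix x assume "x \<in> space N"
    then have [measurable]: "(\<lambda>y. f (x, y)) \<in> borel_measurable M"
      by (rule measurable_Pair2[OF assms(1)])
    have "(\<integral>\<^sup>+y\<in>B. f (x, y) \<partial>M) * indicator A x = (\<integral>\<^sup>+y. f (x, y) * indicator B y * indicator A x \<partial>M)"
      by (rule nn_integral_multc[symmetric]) measurable
    then show "(\<integral>\<^sup>+y. f (x, y) * indicator (A \<times> B) (x, y) \<partial>M) = (\<integral>\<^sup>+y\<in>B. f (x, y) \<partial>M) * indicator A x"
      by (simp add: indicator_times ac_simps)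
  qed
  finally show ?thesis .
qed

lemma borel_measurable_antiderivative:
  fixes w :: "real \<Rightarrow> real \<Rightarrow> real"
  assumes [measurable]: "(\<lambda>p. w (fst p) (snd p)) \<in> borel_measurable (lborel \<Otimes>\<^sub>M lborel)"
  shows "(\<lambda>p. LINT y:{0..snd p}|lborel. w (fst p) y) \<in> borel_measurable (lborel \<Otimes>\<^sub>M lborel)"
proof -
  have "(\<lambda>q. indicator {0..snd (fst q)} (snd q) :: real)
      \<in> borel_measurable ((lborel \<Otimes>\<^sub>M lborel) \<Otimes>\<^sub>M (lborel :: real measure))"
    unfolding indicator_def atLeastAtMost_iff by measurable
  moreover have "(\<lambda>q. w (fst (fst q)) (snd q)) \<in> borel_measurable ((lborel \<Otimes>\<^sub>M lborel) \<Otimes>\<^sub>M lborel)"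
    using measurable_compose[OF _ assms, of "\<lambda>q. (fst (fst q), snd q)" "(lborel \<Otimes>\<^sub>M lborel) \<Otimes>\<^sub>M lborel"]
    by simp
  ultimately have "(\<lambda>(p, y). indicator {0..snd p} y *\<^sub>R w (fst p) y) \<in> borel_measurable ((lborel \<Otimes>\<^sub>M lborel) \<Otimes>\<^sub>M lborel)"
    unfolding case_prod_beta' real_scaleR_def by (rule borel_measurable_times)
  then show ?thesis
    unfolding set_lebesgue_integral_def by (rule lborel.borel_measurable_lebesgue_integral)
qed

lemma L2_H10_measurable:
  "L2_H10 v w \<Longrightarrow> (\<lambda>p. w (fst p) (snd p)) \<in> borel_measurable (lborel \<Otimes>\<^sub>M lborel)"
  by (simp add: L2_H10_def lborel_prod)

lemma L2_H10_set_integrable_deriv_square: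
  "L2_H10 v w \<Longrightarrow> set_integrable (lborel \<Otimes>\<^sub>M lborel) ({0..1} \<times> {0..1}) (\<lambda>p. (w (fst p) (snd p))\<^sup>2)"
  by (simp add: L2_H10_def lborel_prod)

lemma L2_H10_abs_le:
  assumes "L2_H10 v w" "t \<in> {0..1}" "x \<in> {0..1}"
  shows "ennreal \<bar>v t x\<bar> \<le> (\<integral>\<^sup>+y\<in>{0..1}. ennreal \<bar>w t y\<bar> \<partial>lborel)"
proof -
  have "set_integrable lborel {0..1} (w t)" and v: "v t x = (LINT y:{0..x}|lborel. w t y)"
    using assms unfolding L2_H10_def by auto
  from this(1) have "set_integrable lborel {0..x} (w t)"
    by (rule set_integrable_subset) (use assms(3) in auto)
  then have "ennreal \<bar>v t x\<bar> \<le> (\<integral>\<^sup>+y. norm (indicator {0..x} y *\<^sub>R w t y) \<partial>lborel)"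
    unfolding v set_lebesgue_integral_def set_integrable_def real_norm_def[symmetric]
    by (rule integral_norm_bound_ennreal)
  also have "\<dots> \<le> (\<integral>\<^sup>+y\<in>{0..1}. ennreal \<bar>w t y\<bar> \<partial>lborel)"
    by (intro nn_integral_mono) (use assms(3) in \<open>auto simp: indicator_def\<close>)
  finally show ?thesis .
qed

text \<open>The energy is an iterated Bochner integral, which silently takes the value \<open>0\<close> on
  non-integrable integrands; integrability of \<open>v\<^sup>2\<close> is what lets us compare it with the
  \<open>L\<^sup>2\<close> norm of \<open>\<partial>\<^sub>x v\<close>.\<close>
lemma L2_H10_set_integrable_square:
  assumes "L2_H10 v w"
  shows "set_integrable (lborel \<Otimes>\<^sub>M lborel) ({0..1} \<times> {0..1}) (\<lambda>p. (v (fst p) (snd p))\<^sup>2)"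
proof -
  let ?I = "{0..1::real}"
  define V where "V p = (LINT y:{0..snd p}|lborel. w (fst p) y)" for p
  have [measurable]: "(\<lambda>p. w (fst p) (snd p)) \<in> borel_measurable (lborel \<Otimes>\<^sub>M lborel)"
    using assms by (rule L2_H10_measurable)
  then have [measurable]: "V \<in> borel_measurable (lborel \<Otimes>\<^sub>M lborel)"
    unfolding V_def by (rule borel_measurable_antiderivative)
  have [measurable]: "w t \<in> borel_measurable lborel" for t
    using measurable_Pair2[OF \<open>(\<lambda>p. w (fst p) (snd p)) \<in> _\<close>, of t] by simp
  have v_eq: "v (fst p) (snd p) = V p" if "p \<in> ?I \<times> ?I" for p
    using assms that unfolding L2_H10_def V_def by (auto simp: mem_Times_iff)
  have "(\<integral>\<^sup>+p\<in>?I \<times> ?I. ennreal ((V p)\<^sup>2) \<partial>(lborel \<Otimes>\<^sub>M lborel))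
      = (\<integral>\<^sup>+t\<in>?I. (\<integral>\<^sup>+y\<in>?I. ennreal ((V (t, y))\<^sup>2) \<partial>lborel) \<partial>lborel)"
    by (rule lborel.set_nn_integral_Times) auto
  also have "\<dots> \<le> (\<integral>\<^sup>+t\<in>?I. (\<integral>\<^sup>+y\<in>?I. (ennreal \<bar>w t y\<bar>)\<^sup>2 \<partial>lborel) \<partial>lborel)"
  proof (intro nn_integral_mono)
    fix t :: real
    show "(\<integral>\<^sup>+y\<in>?I. ennreal ((V (t, y))\<^sup>2) \<partial>lborel) * indicator ?I t
      \<le> (\<integral>\<^sup>+y\<in>?I. (ennreal \<bar>w t y\<bar>)\<^sup>2 \<partial>lborel) * indicator ?I t"
    proof (cases "t \<in> ?I")
      case True
      have "(\<integral>\<^sup>+y\<in>?I. ennreal ((V (t, y))\<^sup>2) \<partial>lborel) \<le> (\<integral>\<^sup>+y\<in>?I. (\<integral>\<^sup>+z\<in>?I. ennreal \<bar>w t z\<bar> \<partial>lborel)\<^sup>2 \<partial>lborel)"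
      proof (intro nn_integral_mono)
        fix y
        have "ennreal ((V (t, y))\<^sup>2) \<le> (\<integral>\<^sup>+z\<in>?I. ennreal \<bar>w t z\<bar> \<partial>lborel)\<^sup>2"
          if "y \<in> ?I"
          using power_mono[OF L2_H10_abs_le[OF assms True that] zero_le, of 2] v_eq[of "(t, y)"] True that
          by (simp add: ennreal_power)
        then show "ennreal ((V (t, y))\<^sup>2) * indicator ?I y \<le> (\<integral>\<^sup>+z\<in>?I. ennreal \<bar>w t z\<bar> \<partial>lborel)\<^sup>2 * indicator ?I y"
          by (simp add: indicator_def)
      qed
      also have "\<dots> = (\<integral>\<^sup>+z\<in>?I. ennreal \<bar>w t z\<bar> \<partial>lborel)\<^sup>2"
        by (simp add: nn_integral_cmult_indicator)
      also have "\<dots> \<le> (\<integral>\<^sup>+y\<in>?I. (ennreal \<bar>w t y\<bar>)\<^sup>2 \<partial>lborel)"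
        using set_nn_integral_square_le[of "\<lambda>y. ennreal \<bar>w t y\<bar>" lborel ?I] by simp measurable
      finally show ?thesis by (rule mult_right_mono) simp
    qed simp
  qed
  also have "\<dots> = (\<integral>\<^sup>+p\<in>?I \<times> ?I. ennreal ((w (fst p) (snd p))\<^sup>2) \<partial>(lborel \<Otimes>\<^sub>M lborel))"
    by (subst lborel.set_nn_integral_Times) (auto simp: ennreal_power)
  also have "\<dots> < \<infinity>"
    using L2_H10_set_integrable_deriv_square[OF assms]
    by (simp add: set_integrable_def integrable_iff_bounded nn_integral_set_ennreal mult.commute)
  finally have "set_integrable (lborel \<Otimes>\<^sub>M lborel) (?I \<times> ?I) (\<lambda>p. (V p)\<^sup>2)"
    unfolding set_integrable_def
    by (intro integrableI_bounded) (auto simp: nn_integral_set_ennreal mult.commute)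
  then show ?thesis
    by (rule set_integrable_cong[THEN iffD1, rotated -1]) (auto simp: v_eq)
qed

lemma L2_H10_energy_eq:
  assumes "L2_H10 v w"
  shows "energy v w = (LINT p:{0..1} \<times> {0..1}|lborel \<Otimes>\<^sub>M lborel.
    (v (fst p) (snd p))\<^sup>2 + 1/4 * (w (fst p) (snd p))\<^sup>2)"
proof -
  let ?I = "{0..1::real}"
  let ?g = "\<lambda>p. indicator (?I \<times> ?I) p *\<^sub>R ((v (fst p) (snd p))\<^sup>2 + 1/4 * (w (fst p) (snd p))\<^sup>2)"
  have "integrable (lborel \<Otimes>\<^sub>M lborel) ?g"
    using L2_H10_set_integrable_square[OF assms] L2_H10_set_integrable_deriv_square[OF assms]
    unfolding set_integrable_def[symmetric] by auto
  then have "(\<integral>t. (\<integral>y. ?g (t, y) \<partial>lborel) \<partial>lborel) = integral\<^sup>L (lborel \<Otimes>\<^sub>M lborel) ?g"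
    by (rule lborel_pair.integral_fst')
  moreover have "indicator ?I t *\<^sub>R (LINT y:?I|lborel. (v t y)\<^sup>2 + 1/4 * (w t y)\<^sup>2) = (\<integral>y. ?g (t, y) \<partial>lborel)" for t
    unfolding set_lebesgue_integral_def
    by (simp add: indicator_times mult.assoc)
  ultimately show ?thesis
    unfolding energy_def set_lebesgue_integral_def[of _ "?I \<times> ?I"]
    by (simp add: set_lebesgue_integral_def[of _ ?I])
qed

lemma L2_H10_deriv_square_le_energy:
  assumes "L2_H10 v w"
  shows "(LINT p:{0..1} \<times> {0..1}|lborel \<Otimes>\<^sub>M lborel. (w (fst p) (snd p))\<^sup>2) \<le> 4 * energy v w"
proof -
  have "(LINT p:{0..1} \<times> {0..1}|lborel \<Otimes>\<^sub>M lborel. (w (fst p) (snd p))\<^sup>2)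
      \<le> (LINT p:{0..1} \<times> {0..1}|lborel \<Otimes>\<^sub>M lborel. 4 * ((v (fst p) (snd p))\<^sup>2 + 1/4 * (w (fst p) (snd p))\<^sup>2))"
    using L2_H10_set_integrable_square[OF assms] L2_H10_set_integrable_deriv_square[OF assms]
    by (intro set_integral_mono) auto
  also have "\<dots> = 4 * energy v w"
    by (simp only: set_integral_mult_right L2_H10_energy_eq[OF assms])
  finally show ?thesis .
qed

lemma energy_nonneg: "0 \<le> energy v w"
  unfolding energy_def set_lebesgue_integral_def by simp

lemma lagrangian_flow_displacement_le:
  assumes "lagrangian_flow v \<phi>" "x \<in> {0..1}"
  shows "ennreal \<bar>\<phi> 1 x - \<phi> 0 x\<bar> \<le> (\<integral>\<^sup>+t\<in>{0..1}. ennreal \<bar>v t (\<phi> t x)\<bar> \<partial>lborel)"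
proof -
  have "set_integrable lborel {0..1} (\<lambda>t. v t (\<phi> t x))"
    and eq: "\<phi> 1 x - \<phi> 0 x = (LINT t:{0..1}|lborel. v t (\<phi> t x))"
    using assms unfolding lagrangian_flow_def by (metis order_refl zero_less_one)+
  from this(1) have "ennreal \<bar>\<phi> 1 x - \<phi> 0 x\<bar> \<le> (\<integral>\<^sup>+t. norm (indicator {0..1} t *\<^sub>R v t (\<phi> t x)) \<partial>lborel)"
    unfolding eq set_lebesgue_integral_def set_integrable_def real_norm_def[symmetric]
    by (rule integral_norm_bound_ennreal)
  also have "\<dots> = (\<integral>\<^sup>+t\<in>{0..1}. ennreal \<bar>v t (\<phi> t x)\<bar> \<partial>lborel)"
    by (intro nn_integral_cong) (simp add: indicator_def)
  finally show ?thesis .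
qed

lemma lagrangian_flow_displacement_le_deriv:
  assumes "L2_H10 v w" "lagrangian_flow v \<phi>" "x \<in> {0..1}"
  shows "ennreal \<bar>\<phi> 1 x - \<phi> 0 x\<bar>
    \<le> (\<integral>\<^sup>+p\<in>{0..1} \<times> {0..1}. ennreal \<bar>w (fst p) (snd p)\<bar> \<partial>(lborel \<Otimes>\<^sub>M lborel))"
proof -
  let ?I = "{0..1::real}"
  have [measurable]: "(\<lambda>p. w (fst p) (snd p)) \<in> borel_measurable (lborel \<Otimes>\<^sub>M lborel)"
    using assms(1) by (rule L2_H10_measurable)
  have "ennreal \<bar>\<phi> 1 x - \<phi> 0 x\<bar> \<le> (\<integral>\<^sup>+t\<in>?I. ennreal \<bar>v t (\<phi> t x)\<bar> \<partial>lborel)"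
    using assms(2,3) by (rule lagrangian_flow_displacement_le)
  also have "\<dots> \<le> (\<integral>\<^sup>+t\<in>?I. (\<integral>\<^sup>+y\<in>?I. ennreal \<bar>w t y\<bar> \<partial>lborel) \<partial>lborel)"
  proof (intro nn_integral_mono)
    fix t :: real
    have "\<phi> t x \<in> ?I" if "t \<in> ?I"
      using assms(2,3) that unfolding lagrangian_flow_def by blast
    then show "ennreal \<bar>v t (\<phi> t x)\<bar> * indicator ?I t \<le> (\<integral>\<^sup>+y\<in>?I. ennreal \<bar>w t y\<bar> \<partial>lborel) * indicator ?I t"
      using L2_H10_abs_le[OF assms(1)] by (simp add: indicator_def)
  qed
  also have "\<dots> = (\<integral>\<^sup>+p\<in>?I \<times> ?I. ennreal \<bar>w (fst p) (snd p)\<bar> \<partial>(lborel \<Otimes>\<^sub>M lborel))"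
    by (subst lborel.set_nn_integral_Times) auto
  finally show ?thesis .
qed

lemma lagrangian_flow_displacement_le_energy:
  assumes "L2_H10 v w" "lagrangian_flow v \<phi>" "x \<in> {0..1}"
  shows "\<bar>\<phi> 1 x - \<phi> 0 x\<bar> \<le> 2 * sqrt (energy v w)"
proof -
  let ?I = "{0..1::real}"
  have [measurable]: "(\<lambda>p. w (fst p) (snd p)) \<in> borel_measurable (lborel \<Otimes>\<^sub>M lborel)"
    using assms(1) by (rule L2_H10_measurable)
  have "(ennreal \<bar>\<phi> 1 x - \<phi> 0 x\<bar>)\<^sup>2 \<le> (\<integral>\<^sup>+p\<in>?I \<times> ?I. ennreal \<bar>w (fst p) (snd p)\<bar> \<partial>(lborel \<Otimes>\<^sub>M lborel))\<^sup>2"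
    using lagrangian_flow_displacement_le_deriv[OF assms] by (rule power_mono) simp
  also have "\<dots> \<le> (\<integral>\<^sup>+p\<in>?I \<times> ?I. (ennreal \<bar>w (fst p) (snd p)\<bar>)\<^sup>2 \<partial>(lborel \<Otimes>\<^sub>M lborel))"
    using set_nn_integral_square_le[of "\<lambda>p. ennreal \<bar>w (fst p) (snd p)\<bar>" "lborel \<Otimes>\<^sub>M lborel" "?I \<times> ?I"]
    by (simp add: lborel.emeasure_pair_measure_Times)
  also have "\<dots> = ennreal (LINT p:?I \<times> ?I|lborel \<Otimes>\<^sub>M lborel. (w (fst p) (snd p))\<^sup>2)"
    using L2_H10_set_integrable_deriv_square[OF assms(1)]
    unfolding set_lebesgue_integral_def set_integrable_def
    by (subst nn_integral_eq_integral[symmetric]) (auto simp: ennreal_power nn_integral_set_ennreal mult.commute)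
  also have "\<dots> \<le> ennreal (4 * energy v w)"
    using L2_H10_deriv_square_le_energy[OF assms(1)] by (rule ennreal_leI)
  finally have "(\<phi> 1 x - \<phi> 0 x)\<^sup>2 \<le> 4 * energy v w"
    using energy_nonneg[of v w] by (simp add: ennreal_power)
  then have "sqrt ((\<phi> 1 x - \<phi> 0 x)\<^sup>2) \<le> sqrt (4 * energy v w)"
    by (rule real_sqrt_le_mono)
  then show ?thesis
    by (simp add: real_sqrt_mult)
qed

theorem mainTheorem2:
  fixes \<phi>0 \<phi>1 :: "real \<Rightarrow> real"
  assumes "\<phi>0 \<in> Mon_plus" and "\<phi>1 \<in> Mon_plus"
  shows "ereal (SUP x\<in>{0..1}. \<bar>\<phi>0 x - \<phi>1 x\<bar>) \<le> 2 * dist_Mon \<phi>0 \<phi>1"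
proof -
  \<comment> \<open>the bound holds for arbitrary endpoints\<close>
  define s where "s = (SUP x\<in>{0..1::real}. \<bar>\<phi>0 x - \<phi>1 x\<bar>)"
  have "ereal (s / 2) \<le> dist_Mon \<phi>0 \<phi>1"
    unfolding dist_Mon_def
  proof (rule INF_greatest)
    fix p assume "p \<in> admissible \<phi>0 \<phi>1"
    then obtain v w \<phi> where p: "p = (v, w)" and "L2_H10 v w" "lagrangian_flow v \<phi>"
      and ends: "\<forall>x\<in>{0..1}. \<phi> 0 x = \<phi>0 x \<and> \<phi> 1 x = \<phi>1 x"
      unfolding admissible_def by auto
    have "s \<le> 2 * sqrt (energy v w)"
      unfolding s_def
    proof (rule cSUP_least)
      fix x :: real assume "x \<in> {0..1}"
      then show "\<bar>\<phi>0 x - \<phi>1 x\<bar> \<le> 2 * sqrt (energy v w)"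
        using lagrangian_flow_displacement_le_energy[OF \<open>L2_H10 v w\<close> \<open>lagrangian_flow v \<phi>\<close>] ends
        by (metis abs_minus_commute)
    qed simp
    then show "ereal (s / 2) \<le> ereal (sqrt (energy (fst p) (snd p)))"
      using p by simp
  qed
  then have "2 * ereal (s / 2) \<le> 2 * dist_Mon \<phi>0 \<phi>1"
    by (rule ereal_mult_left_mono) simp
  then show ?thesis
    unfolding s_def by simp
qed

end
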